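(* Let $(L,[\cdot,\cdot],\cdot,\alpha)$ be a multiplicative Hom-post-Lie algebra and let $k$ be a non-negative integer. Define $\{x,y\}:=[\alpha^k(x),y]$ and $x\ast y:=\alpha^k(x)\cdot y$ for $x,y\in L$. Then $(L,\{\cdot,\cdot\},\ast,\alpha)$ (i.e. $L$ with $\diamond=\{\cdot,\cdot\}$, $\bullet=\ast$ and structure map $\alpha$) is a module over the Hom-post-Lie algebra $(L,[\cdot,\cdot],\cdot,\alpha)$.
   Context: All vector spaces are over a field $\mathbb{K}$ of characteristic $\neq 2$. A Hom-Lie algebra is $(L,[\cdot,\cdot],\alpha)$ with $[\cdot,\cdot]$ bilinear and skew-symmetric, $\alpha$ linear, and $[\alpha(x),[y,z]]+[\alpha(y),[z,x]]+[\alpha(z),[x,y]]=0$. A Hom-post-Lie algebra $(L,[\cdot,\cdot],\cdot,\alpha)$ is a Hom-Lie algebra with a bilinear $\cdot$ such that for all $x,y,z$: $\alpha(z)\cdot[x,y]-[z\cdot x,\alpha(y)]-[\alpha(x),z\cdot y]=0$ and $\alpha(z)\cdot(y\cdot x)-\alpha(y)\cdot(z\cdot x)+(y\cdot z)\cdot\alpha(x)-(z\cdot y)\cdot\alpha(x)+[y,z]\cdot\alpha(x)=0$. It is multiplicative if $\alpha([x,y])=[\alpha(x),\alpha(y)]$ and $\alpha(x\cdot y)=\alpha(x)\cdot\alpha(y)$. A module over $L$ is a vector space $M$ with linear $\alpha_M:M\to M$ and bilinear $\diamond,\bullet:L\otimes M\to M$ such that for all $x,y\in L$, $m\in M$: (i)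 $\alpha_M(x\diamond m)=\alpha(x)\diamond\alpha_M(m)$, $\alpha_M(x\bullet m)=\alpha(x)\bullet\alpha_M(m)$; (ii) $[x,y]\diamond\alpha_M(m)=\alpha(x)\diamond(y\diamond m)-\alpha(y)\diamond(x\diamond m)$; (iii) $(x\cdot y)\diamond\alpha_M(m)=\alpha(x)\bullet(y\diamond m)-\alpha(y)\diamond(x\bullet m)$; (iv) $[x,y]\bullet\alpha_M(m)=\alpha(x)\bullet(y\bullet m)-\alpha(y)\bullet(x\bullet m)-(x\cdot y)\bullet\alpha_M(m)+(y\cdot x)\bullet\alpha_M(m)$. *)

theory Defs
  imports Main "HOL.Vector_Spaces"
begin

definition bilinear_map ::
  "('k::field \<Rightarrow> 'a::ab_group_add \<Rightarrow> 'a) \<Rightarrow> ('k \<Rightarrow> 'b::ab_group_add \<Rightarrow> 'b)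
   \<Rightarrow> ('k \<Rightarrow> 'c::ab_group_add \<Rightarrow> 'c) \<Rightarrow> ('a \<Rightarrow> 'b \<Rightarrow> 'c) \<Rightarrow> bool" where
  "bilinear_map s1 s2 s3 f \<longleftrightarrow>
     (\<forall>y. Vector_Spaces.linear s1 s3 (\<lambda>x. f x y)) \<and> (\<forall>x. Vector_Spaces.linear s2 s3 (f x))"

definition hom_lie_algebra ::
  "('k::field \<Rightarrow> 'a::ab_group_add \<Rightarrow> 'a) \<Rightarrow> ('a \<Rightarrow> 'a \<Rightarrow> 'a) \<Rightarrow> ('a \<Rightarrow> 'a) \<Rightarrow> bool" where
  "hom_lie_algebra s br al \<longleftrightarrow>
     vector_space s \<and> bilinear_map s s s br \<and> Vector_Spaces.linear s s al \<and>
     (\<forall>x y. br x y = - br y x) \<and>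
     (\<forall>x y z. br (al x) (br y z) + br (al y) (br z x) + br (al z) (br x y) = 0)"

definition hom_post_lie_algebra ::
  "('k::field \<Rightarrow> 'a::ab_group_add \<Rightarrow> 'a) \<Rightarrow> ('a \<Rightarrow> 'a \<Rightarrow> 'a) \<Rightarrow> ('a \<Rightarrow> 'a \<Rightarrow> 'a)
   \<Rightarrow> ('a \<Rightarrow> 'a) \<Rightarrow> bool" where
  "hom_post_lie_algebra s br dot al \<longleftrightarrow>
     hom_lie_algebra s br al \<and> bilinear_map s s s dot \<and>
     (\<forall>x y z. dot (al z) (br x y) - br (dot z x) (al y) - br (al x) (dot z y) = 0) \<and>
     (\<forall>x y z. dot (al z) (dot y x) - dot (al y) (dot z x) + dot (dot y z) (al x)
               - dot (dot z y) (al x) + dot (br y z) (al x) = 0)"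

definition multiplicative ::
  "('a \<Rightarrow> 'a \<Rightarrow> 'a) \<Rightarrow> ('a \<Rightarrow> 'a \<Rightarrow> 'a) \<Rightarrow> ('a \<Rightarrow> 'a) \<Rightarrow> bool" where
  "multiplicative br dot al \<longleftrightarrow>
     (\<forall>x y. al (br x y) = br (al x) (al y)) \<and> (\<forall>x y. al (dot x y) = dot (al x) (al y))"

definition hom_post_lie_module ::
  "('k::field \<Rightarrow> 'a::ab_group_add \<Rightarrow> 'a) \<Rightarrow> ('a \<Rightarrow> 'a \<Rightarrow> 'a) \<Rightarrow> ('a \<Rightarrow> 'a \<Rightarrow> 'a) \<Rightarrow> ('a \<Rightarrow> 'a)
   \<Rightarrow> ('k \<Rightarrow> 'm::ab_group_add \<Rightarrow> 'm) \<Rightarrow> ('m \<Rightarrow> 'm) \<Rightarrow> ('a \<Rightarrow> 'm \<Rightarrow> 'm) \<Rightarrow> ('a \<Rightarrow> 'm \<Rightarrow> 'm)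
   \<Rightarrow> bool" where
  "hom_post_lie_module s br dot al sM alM dia bul \<longleftrightarrow>
     vector_space sM \<and> Vector_Spaces.linear sM sM alM \<and>
     bilinear_map s sM sM dia \<and> bilinear_map s sM sM bul \<and>
     (\<forall>x m. alM (dia x m) = dia (al x) (alM m)) \<and>
     (\<forall>x m. alM (bul x m) = bul (al x) (alM m)) \<and>
     (\<forall>x y m. dia (br x y) (alM m) = dia (al x) (dia y m) - dia (al y) (dia x m)) \<and>
     (\<forall>x y m. dia (dot x y) (alM m) = bul (al x) (dia y m) - dia (al y) (bul x m)) \<and>
     (\<forall>x y m. bul (br x y) (alM m) = bul (al x) (bul y m) - bul (al y) (bul x m)
                 - bul (dot x y) (alM m) + bul (dot y x) (alM m))"

end

theory Submission
  imports Defs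
begin

text \<open>For k = 0 the module in question is the adjoint module (L, br, dot, al) itself, whose
  axioms are rearrangements of the Hom-Jacobi identity and of the two Hom-post-Lie identities.
  A general k is obtained by pulling the adjoint module back along the algebra endomorphism
  al^k, which commutes with al and preserves both products because the algebra is multiplicative.\<close>

lemma linear_funpow:
  assumes "vector_space s" and "Vector_Spaces.linear s s f"
  shows "Vector_Spaces.linear s s (f ^^ n)"
proof (induction n)
  case 0
  show ?case using vector_space.linear_id[OF assms(1)] by (simp add: id_def)
next
  case (Suc n)
  show ?case using Vector_Spaces.linear_compose[OF Suc assms(2)] by (simp add: comp_def)
qed

lemma funpow_preserves_operation:
  assumes "\<And>x y. f (op x y) = op (f x) (f y)"
  shows "(f ^^ n) (op x y) = op ((f ^^ n) x) ((f ^^ n) y)"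
  using assms by (induction n) auto

lemma linear_minus:
  assumes "Vector_Spaces.linear s1 s2 f"
  shows "f (- x) = - f x"
  using assms unfolding linear_iff_module_hom by (rule module_hom.neg)

lemma bilinear_map_minus:
  assumes "bilinear_map s1 s2 s3 f"
  shows "f (- x) y = - f x y" and "f x (- y) = - f x y"
  using assms linear_minus unfolding bilinear_map_def by blast+

lemma bilinear_map_compose_left:
  assumes "bilinear_map s1 s2 s3 f" and "Vector_Spaces.linear s0 s1 g"
  shows "bilinear_map s0 s2 s3 (\<lambda>x y. f (g x) y)"
  using assms Vector_Spaces.linear_compose[OF assms(2)]
  unfolding bilinear_map_def comp_def by blast

lemma hom_post_lie_module_pullback:
  assumes "hom_post_lie_module s br dot al sM alM dia bul"
    and "Vector_Spaces.linear s s \<phi>"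
    and "\<And>x. \<phi> (al x) = al (\<phi> x)"
    and "\<And>x y. \<phi> (br x y) = br (\<phi> x) (\<phi> y)"
    and "\<And>x y. \<phi> (dot x y) = dot (\<phi> x) (\<phi> y)"
  shows "hom_post_lie_module s br dot al sM alM (\<lambda>x. dia (\<phi> x)) (\<lambda>x. bul (\<phi> x))"
proof -
  have "bilinear_map s sM sM dia" and "bilinear_map s sM sM bul"
    using assms(1) unfolding hom_post_lie_module_def by blast+
  then have "bilinear_map s sM sM (\<lambda>x. dia (\<phi> x))" and "bilinear_map s sM sM (\<lambda>x. bul (\<phi> x))"
    using bilinear_map_compose_left assms(2) by blast+
  then show ?thesis
    using assms unfolding hom_post_lie_module_def by simp
qed

lemma hom_lie_adjoint_identity:
  assumes "hom_lie_algebra s br al"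
  shows "br (br x y) (al m) = br (al x) (br y m) - br (al y) (br x m)"
proof -
  have skew: "\<And>u v. br u v = - br v u" and bil: "bilinear_map s s s br"
    using assms unfolding hom_lie_algebra_def by blast+
  have "br (al x) (br y m) + br (al y) (br m x) + br (al m) (br x y) = 0"
    using assms unfolding hom_lie_algebra_def by blast
  then have "br (al x) (br y m) - br (al y) (br x m) - br (br x y) (al m) = 0"
    by (metis skew[of m x] skew[of "al m"] bilinear_map_minus(2)[OF bil] diff_conv_add_uminus)
  then show ?thesis by (simp add: algebra_simps)
qed

lemma hom_post_lie_adjoint_module:
  assumes "hom_post_lie_algebra s br dot al" and "multiplicative br dot al"
  shows "hom_post_lie_module s br dot al s al br dot"
proof -
  have lie: "hom_lie_algebra s br al" and bil_dot: "bilinear_map s s s dot"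
    and skew: "\<And>u v. br u v = - br v u"
    and post1: "\<And>x y z. dot (al z) (br x y) - br (dot z x) (al y) - br (al x) (dot z y) = 0"
    and post2: "\<And>x y z. dot (al z) (dot y x) - dot (al y) (dot z x) + dot (dot y z) (al x)
                  - dot (dot z y) (al x) + dot (br y z) (al x) = 0"
    using assms(1) unfolding hom_post_lie_algebra_def hom_lie_algebra_def by blast+
  have dot_br: "dot (br x y) (al m) = dot (al x) (dot y m) - dot (al y) (dot x m)
                  - dot (dot x y) (al m) + dot (dot y x) (al m)" for x y m
  proof -
    have "dot (br y x) (al m) = - dot (br x y) (al m)"
      using skew[of y x] bilinear_map_minus(1)[OF bil_dot] by simp
    then show ?thesis using post2[where x = m and y = x and z = y] by (simp add: algebra_simps)
  qed
  have br_dot: "br (dot x y) (al m) = dot (al x) (br y m) - br (al y) (dot x m)" for x y m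
    using post1[where x = y and y = m and z = x] by (simp add: algebra_simps)
  have "vector_space s" and "Vector_Spaces.linear s s al" and "bilinear_map s s s br"
    using lie unfolding hom_lie_algebra_def by blast+
  moreover have "al (br x m) = br (al x) (al m)" and "al (dot x m) = dot (al x) (al m)" for x m
    using assms(2) unfolding multiplicative_def by blast+
  ultimately show ?thesis
    using bil_dot hom_lie_adjoint_identity[OF lie] dot_br br_dot
    unfolding hom_post_lie_module_def by (intro conjI allI) assumption+
qed

theorem mainTheorem2:
  fixes s :: "'k::field \<Rightarrow> 'a::ab_group_add \<Rightarrow> 'a"
    and br dot :: "'a \<Rightarrow> 'a \<Rightarrow> 'a" and al :: "'a \<Rightarrow> 'a" and k :: nat
  assumes "(2::'k) \<noteq> 0"
    and "hom_post_lie_algebra s br dot al"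
    and "multiplicative br dot al"
  shows "hom_post_lie_module s br dot al s al
           (\<lambda>x y. br ((al ^^ k) x) y) (\<lambda>x y. dot ((al ^^ k) x) y)"
proof -
  have "vector_space s" and "Vector_Spaces.linear s s al"
    using assms(2) unfolding hom_post_lie_algebra_def hom_lie_algebra_def by blast+
  then have "Vector_Spaces.linear s s (al ^^ k)"
    by (rule linear_funpow)
  moreover have "(al ^^ k) (al x) = al ((al ^^ k) x)" for x
    by (simp add: funpow_swap1)
  moreover have "(al ^^ k) (br x y) = br ((al ^^ k) x) ((al ^^ k) y)"
    and "(al ^^ k) (dot x y) = dot ((al ^^ k) x) ((al ^^ k) y)" for x y
    using assms(3) unfolding multiplicative_def by (blast intro: funpow_preserves_operation)+
  ultimately show ?thesis
    using hom_post_lie_module_pullback[OF hom_post_lie_adjoint_module[OF assms(2,3)]] by blast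
qed

end
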